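(* With notation as in the context, define for $X,Y\in\zeta_s^+(V_0)$ the product $X\circ Y:=(Y+s)(X+Y)^{-1}(X+s)-s$. Then for all $x,y\in\mathrm{H}(V_0^s)$ one has $xy\in\mathrm{H}(V_0^s)$ and $a_{xy}=a_x\circ a_y$.
   Context: $V_0=V_0^+\oplus V_0^-$ is an orthogonal decomposition of a finite-dimensional complex Hermitian space, $s=\mathrm{Id}_{V_0^+}\oplus(-\mathrm{Id}_{V_0^-})$, $\mathrm{H}(V_0^s)=\{g\in\mathrm{GL}(V_0):g^\dagger sg<s\}$, $\zeta_s^+(V_0)=\{X\in\mathrm{End}(V_0):\tfrac12(X+X^\dagger)>0,\ \mathrm{Det}(X+s)\ne0\}$, and $a_h=s(1+h)(1-h)^{-1}$ for $h\in\mathrm{H}(V_0^s)$ (with $1=\mathrm{Id}_{V_0}$); $1-h$ is invertible and $a_h\in\zeta_s^+(V_0)$. Note $X+Y$ is invertible for $X,Y\in\zeta_s^+(V_0)$ since $\mathfrak{Re}(X+Y)>0$. *)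

theory Defs
  imports "HOL-Analysis.Analysis"
begin

text \<open>V_0 = complex^'n with the standard Hermitian inner product; endomorphisms are
  matrices complex^'n^'n.\<close>

definition cinner :: "complex ^'n \<Rightarrow> complex ^'n \<Rightarrow> complex" where
  "cinner x y = (\<Sum>i\<in>UNIV. cnj (x $ i) * y $ i)"

definition madj :: "complex ^'n^'n \<Rightarrow> complex ^'n^'n" where
  "madj A = (\<chi> i j. cnj (A $ j $ i))"

definition hermitian :: "complex ^'n^'n \<Rightarrow> bool" where
  "hermitian A \<longleftrightarrow> madj A = A"

definition posdef :: "complex ^'n^'n \<Rightarrow> bool" where
  "posdef A \<longleftrightarrow> hermitian A \<and> (\<forall>x. x \<noteq> 0 \<longrightarrow> 0 < Re (cinner x (A *v x)))"

definition herm_less :: "complex ^'n^'n \<Rightarrow> complex ^'n^'n \<Rightarrow> bool" where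
  "herm_less A B \<longleftrightarrow> hermitian A \<and> hermitian B \<and> posdef (B - A)"

text \<open>s = Id on V_0^+ and -Id on V_0^- for an orthogonal decomposition V_0 = V_0^+ + V_0^-:
  equivalently, a Hermitian involution.\<close>
definition sign_op :: "complex ^'n^'n \<Rightarrow> bool" where
  "sign_op s \<longleftrightarrow> hermitian s \<and> s ** s = mat 1"

definition Hs :: "complex ^'n^'n \<Rightarrow> (complex ^'n^'n) set" where
  "Hs s = {g. invertible g \<and> herm_less (madj g ** s ** g) s}"

definition zeta_plus :: "complex ^'n^'n \<Rightarrow> (complex ^'n^'n) set" where
  "zeta_plus s = {X. posdef ((1/2::real) *\<^sub>R (X + madj X)) \<and> det (X + s) \<noteq> 0}"

definition a_map :: "complex ^'n^'n \<Rightarrow> complex ^'n^'n \<Rightarrow> complex ^'n^'n" where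
  "a_map s h = s ** (mat 1 + h) ** matrix_inv (mat 1 - h)"

definition zeta_prod :: "complex ^'n^'n \<Rightarrow> complex ^'n^'n \<Rightarrow> complex ^'n^'n \<Rightarrow> complex ^'n^'n" where
  "zeta_prod s X Y = (Y + s) ** matrix_inv (X + Y) ** (X + s) - s"

end

theory Submission
  imports Defs
begin

text \<open>Write \<open>A = 1 - x\<close>, \<open>B = 1 - y\<close>, \<open>C = 1 - x y\<close>. The Cayley-type map satisfies
  \<open>a\<^sub>h + s = 2 s (1 - h)\<inverse>\<close>, and \<open>C = A + B - A B\<close> gives
  \<open>A\<inverse> C B\<inverse> = A\<inverse> + B\<inverse> - 1\<close>, so \<open>a\<^sub>x + a\<^sub>y = 2 s A\<inverse> C B\<inverse>\<close>. Its inverse is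
  \<open>B C\<inverse> A s / 2\<close> (using \<open>s\<^sup>2 = 1\<close>), and then
  \<open>(a\<^sub>y + s)(a\<^sub>x + a\<^sub>y)\<inverse>(a\<^sub>x + s) = 2 s C\<inverse> = a\<^sub>x\<^sub>y + s\<close>.
  The invertibility of \<open>1 - h\<close> for \<open>h \<in> H(V\<^sub>0\<^sup>s)\<close> holds because a fixed vector \<open>v\<close> of \<open>h\<close>
  would give \<open>\<langle>v, (s - h\<^sup>\<dagger> s h) v\<rangle> = 0\<close>, and closure under products follows from
  \<open>s - (x y)\<^sup>\<dagger> s (x y) = (s - y\<^sup>\<dagger> s y) + y\<^sup>\<dagger> (s - x\<^sup>\<dagger> s x) y\<close>.\<close>

lemma matrix_add_rdistrib: "((A::'a::semiring_1^'n^'m) + B) ** C = A ** C + B ** C"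
  by (simp add: matrix_matrix_mult_def vec_eq_iff sum.distrib distrib_right)

lemma matrix_diff_ldistrib: "(A::'a::ring_1^'n^'m) ** (B - C) = A ** B - A ** C"
  by (simp add: matrix_matrix_mult_def vec_eq_iff sum_subtractf right_diff_distrib)

lemma matrix_diff_rdistrib: "((A::'a::ring_1^'n^'m) - B) ** C = A ** C - B ** C"
  by (simp add: matrix_matrix_mult_def vec_eq_iff sum_subtractf left_diff_distrib)

lemma matrix_mul_cancel_right:
  "P ** Q = mat 1 \<Longrightarrow> M ** P ** Q = (M::'a::semiring_1^'n^'m)"
  by (metis matrix_mul_assoc matrix_mul_rid)

lemma matrix_inv_right: "invertible A \<Longrightarrow> A ** matrix_inv A = mat 1"
  unfolding invertible_def matrix_inv_def by (rule someI2_ex) blast+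

lemma matrix_inv_left: "invertible A \<Longrightarrow> matrix_inv A ** A = mat 1"
  unfolding invertible_def matrix_inv_def by (rule someI2_ex) blast+

lemma matrix_inv_unique:
  fixes A B :: "'a::field^'n^'n"
  assumes "A ** B = mat 1"
  shows "matrix_inv A = B"
proof -
  have "invertible A"
    using assms invertible_right_inverse by blast
  have "matrix_inv A = matrix_inv A ** (A ** B)"
    using assms by simp
  also have "\<dots> = B"
    by (simp add: matrix_mul_assoc matrix_inv_left[OF \<open>invertible A\<close>])
  finally show ?thesis .
qed

lemma matrix_inv_one_minus_mult:
  fixes x y :: "'a::field^'n^'n"
  assumes x: "invertible (mat 1 - x)" and y: "invertible (mat 1 - y)"
  shows "matrix_inv (mat 1 - x) ** (mat 1 - x ** y) ** matrix_inv (mat 1 - y)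
       = matrix_inv (mat 1 - x) + matrix_inv (mat 1 - y) - mat 1"
proof -
  define A B where "A = mat 1 - x" and "B = mat 1 - y"
  have "mat 1 - x ** y = A + B - A ** B"
    by (simp add: A_def B_def matrix_diff_ldistrib matrix_diff_rdistrib)
  then show ?thesis
    using matrix_inv_left[OF x] matrix_inv_right[OF y]
    by (simp add: A_def[symmetric] B_def[symmetric] matrix_add_ldistrib matrix_add_rdistrib
        matrix_diff_ldistrib matrix_diff_rdistrib matrix_mul_assoc matrix_mul_cancel_right)
qed

lemma madj_mult: "madj (A ** B) = madj B ** madj A"
  by (simp add: madj_def matrix_matrix_mult_def vec_eq_iff mult.commute)

lemma madj_madj [simp]: "madj (madj A) = A"
  by (simp add: madj_def vec_eq_iff)

lemma cinner_madj: "cinner x (A *v y) = cinner (madj A *v x) y"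
proof -
  have "cinner x (A *v y) = (\<Sum>i\<in>UNIV. \<Sum>j\<in>UNIV. cnj (x $ i) * (A $ i $ j * y $ j))"
    unfolding cinner_def matrix_vector_mult_def by (simp add: sum_distrib_left)
  also have "\<dots> = (\<Sum>j\<in>UNIV. \<Sum>i\<in>UNIV. cnj (x $ i) * (A $ i $ j * y $ j))"
    by (rule sum.swap)
  also have "\<dots> = cinner (madj A *v x) y"
    unfolding cinner_def matrix_vector_mult_def madj_def
    by (simp add: sum_distrib_left sum_distrib_right mult_ac)
  finally show ?thesis .
qed

lemma hermitian_congruence: "hermitian P \<Longrightarrow> hermitian (madj y ** P ** y)"
  by (simp add: hermitian_def madj_mult matrix_mul_assoc)

lemma posdef_add: "posdef A \<Longrightarrow> posdef B \<Longrightarrow> posdef (A + B)"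
  by (simp add: posdef_def hermitian_def madj_def vec_eq_iff cinner_def
      matrix_vector_mult_add_rdistrib sum.distrib distrib_left add_pos_pos)

lemma posdef_congruence:
  fixes P y :: "complex^'n^'n"
  assumes P: "posdef P" and y: "invertible y"
  shows "posdef (madj y ** P ** y)"
  unfolding posdef_def
proof (intro conjI allI impI)
  show "hermitian (madj y ** P ** y)"
    using P by (simp add: posdef_def hermitian_congruence)
  fix v :: "complex^'n"
  assume "v \<noteq> 0"
  then have "y *v v \<noteq> 0"
    by (metis y inj_matrix_vector_mult injD matrix_vector_mult_0_right)
  then have "0 < Re (cinner (y *v v) (P *v (y *v v)))"
    using P by (simp add: posdef_def)
  also have "cinner (y *v v) (P *v (y *v v)) = cinner v ((madj y ** P ** y) *v v)"
    by (simp add: cinner_madj matrix_vector_mul_assoc[symmetric])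
  finally show "0 < Re (cinner v ((madj y ** P ** y) *v v))" .
qed

lemma Hs_mult:
  assumes s: "hermitian s" and x: "x \<in> Hs s" and y: "y \<in> Hs s"
  shows "x ** y \<in> Hs s"
proof -
  have "s - madj (x ** y) ** s ** (x ** y)
      = (s - madj y ** s ** y) + madj y ** (s - madj x ** s ** x) ** y"
    by (simp add: madj_mult matrix_diff_ldistrib matrix_diff_rdistrib matrix_mul_assoc)
  moreover have "posdef (s - madj y ** s ** y)" "posdef (s - madj x ** s ** x)" "invertible y"
    using x y by (auto simp: Hs_def herm_less_def)
  ultimately have "posdef (s - madj (x ** y) ** s ** (x ** y))"
    by (metis posdef_add posdef_congruence)
  moreover have "invertible (x ** y)"
    using x y by (auto simp: Hs_def intro: invertible_mult)
  ultimately show ?thesis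
    using s by (simp add: Hs_def herm_less_def hermitian_congruence)
qed

lemma Hs_invertible_one_minus:
  fixes g s :: "complex^'n^'n"
  assumes "g \<in> Hs s"
  shows "invertible (mat 1 - g)"
  unfolding invertible_left_inverse matrix_left_invertible_ker
proof (intro allI impI)
  fix v :: "complex^'n"
  assume "(mat 1 - g) *v v = 0"
  then have gv: "g *v v = v"
    by (simp add: matrix_vector_mult_diff_rdistrib)
  have "cinner v ((madj g ** s ** g) *v v) = cinner v (s *v v)"
    by (metis cinner_madj gv madj_madj matrix_vector_mul_assoc)
  then have "cinner v ((s - madj g ** s ** g) *v v) = 0"
    by (simp add: matrix_vector_mult_diff_rdistrib cinner_def sum_subtractf right_diff_distrib)
  moreover have "posdef (s - madj g ** s ** g)"
    using assms by (simp add: Hs_def herm_less_def)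
  ultimately show "v = 0"
    unfolding posdef_def by force
qed

lemma a_map_add_sign:
  fixes s h :: "complex^'n^'n"
  assumes "invertible (mat 1 - h)"
  shows "a_map s h + s = 2 *\<^sub>R (s ** matrix_inv (mat 1 - h))"
proof -
  have "s = s ** (mat 1 - h) ** matrix_inv (mat 1 - h)"
    by (simp add: matrix_inv_right[OF assms] matrix_mul_assoc[symmetric])
  then have "a_map s h + s = s ** ((mat 1 + h) + (mat 1 - h)) ** matrix_inv (mat 1 - h)"
    by (simp only: a_map_def matrix_add_ldistrib matrix_add_rdistrib)
  also have "(mat 1 + h) + (mat 1 - h) = mat 1 + mat 1"
    by simp
  finally show ?thesis
    by (simp only: matrix_add_ldistrib matrix_add_rdistrib matrix_mul_rid scaleR_2)
qed

lemma a_map_add: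
  fixes s x y :: "complex^'n^'n"
  assumes x: "invertible (mat 1 - x)" and y: "invertible (mat 1 - y)"
  shows "a_map s x + a_map s y
       = 2 *\<^sub>R (s ** matrix_inv (mat 1 - x) ** (mat 1 - x ** y) ** matrix_inv (mat 1 - y))"
proof -
  have "a_map s x + a_map s y = (a_map s x + s) + (a_map s y + s) - 2 *\<^sub>R (s ** mat 1)"
    by (simp add: scaleR_2)
  also have "\<dots> = 2 *\<^sub>R (s ** (matrix_inv (mat 1 - x) + matrix_inv (mat 1 - y) - mat 1))"
    by (simp only: a_map_add_sign x y matrix_add_ldistrib matrix_diff_ldistrib
        scaleR_right_diff_distrib scaleR_right_distrib)
  also have "\<dots> = 2 *\<^sub>R
      (s ** (matrix_inv (mat 1 - x) ** (mat 1 - x ** y) ** matrix_inv (mat 1 - y)))"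
    by (simp only: matrix_inv_one_minus_mult[OF x y])
  finally show ?thesis
    by (simp only: matrix_mul_assoc)
qed

lemma a_map_mult:
  fixes s x y :: "complex^'n^'n"
  assumes s: "s ** s = mat 1"
    and x: "invertible (mat 1 - x)" and y: "invertible (mat 1 - y)"
    and xy: "invertible (mat 1 - x ** y)"
  shows "a_map s (x ** y) = zeta_prod s (a_map s x) (a_map s y)"
proof -
  define A B C where "A = mat 1 - x" and "B = mat 1 - y" and "C = mat 1 - x ** y"
  define Z where "Z = (1/2::real) *\<^sub>R (B ** matrix_inv C ** A ** s)"
  have "(a_map s x + a_map s y) ** Z
      = s ** matrix_inv A ** C ** (matrix_inv B ** B) ** matrix_inv C ** A ** s"
    by (simp add: a_map_add[OF x y] Z_def A_def B_def C_def
        matrix_scalar_ac scalar_matrix_assoc[symmetric] matrix_mul_assoc)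
  also have "\<dots> = mat 1"
    by (simp add: A_def B_def C_def matrix_inv_left[OF y] matrix_mul_assoc
        matrix_mul_cancel_right[OF matrix_inv_right[OF xy]]
        matrix_mul_cancel_right[OF matrix_inv_left[OF x]] s)
  finally have "matrix_inv (a_map s x + a_map s y) = Z"
    by (rule matrix_inv_unique)
  then have "zeta_prod s (a_map s x) (a_map s y) = (a_map s y + s) ** Z ** (a_map s x + s) - s"
    by (simp add: zeta_prod_def)
  also have "(a_map s y + s) ** Z ** (a_map s x + s)
      = 2 *\<^sub>R (s ** (matrix_inv B ** B) ** matrix_inv C ** A ** (s ** s) ** matrix_inv A)"
    by (simp add: a_map_add_sign x y Z_def A_def B_def
        matrix_scalar_ac scalar_matrix_assoc[symmetric] matrix_mul_assoc)
  also have "\<dots> = a_map s (x ** y) + s"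
    by (simp add: a_map_add_sign[OF xy] C_def A_def B_def matrix_inv_left[OF y] s
        matrix_mul_cancel_right[OF matrix_inv_right[OF x]])
  finally show ?thesis
    by simp
qed

theorem mainTheorem13:
  fixes s x y :: "complex ^'n^'n"
  assumes "sign_op s"
    and "x \<in> Hs s" and "y \<in> Hs s"
  shows "x ** y \<in> Hs s \<and> a_map s (x ** y) = zeta_prod s (a_map s x) (a_map s y)"
proof
  have s: "hermitian s" "s ** s = mat 1"
    using assms(1) by (simp_all add: sign_op_def)
  show xy: "x ** y \<in> Hs s"
    using Hs_mult[OF s(1) assms(2,3)] .
  show "a_map s (x ** y) = zeta_prod s (a_map s x) (a_map s y)"
    using a_map_mult[OF s(2)] Hs_invertible_one_minus assms(2,3) xy by blast
qed

end
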